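(* Let $n \in \mathbb{N}$ and let $f \colon I^n \to \mathbb{R}^{n-1}$ be continuous. Then there exist a point $p \in \mathbb{R}^{n-1}$ and a compact subset $S \subset f^{-1}[\{p\}]$ which connects some opposite faces of $I^n$.
   Context: $I^n = [0,1]^n$, $\mathbb{R}^0 = \{0\}$. For $i \in \{1,\dots,n\}$ let $I^n_{i,-} = \{z \in I^n : z_i = 0\}$ and $I^n_{i,+} = \{z \in I^n : z_i = 1\}$. A set $S \subset I^n$ connects some opposite faces of $I^n$ if $S$ is connected and there is $i$ with $S \cap I^n_{i,-} \ne \emptyset \ne S \cap I^n_{i,+}$. *)

theory Defs
  imports "HOL-Analysis.Analysis"
begin

text \<open>Points of R^n are modelled as functions nat => real vanishing at indices >= n
  (the library's Euclidean_space n); coordinates are indexed 0..n-1 instead of 1..n.\<close>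

definition unit_cube :: "nat \<Rightarrow> (nat \<Rightarrow> real) set" where
  "unit_cube n = {x. (\<forall>i<n. 0 \<le> x i \<and> x i \<le> 1) \<and> (\<forall>i\<ge>n. x i = 0)}"

definition cube_face_minus :: "nat \<Rightarrow> nat \<Rightarrow> (nat \<Rightarrow> real) set" where
  "cube_face_minus n i = {z \<in> unit_cube n. z i = 0}"

definition cube_face_plus :: "nat \<Rightarrow> nat \<Rightarrow> (nat \<Rightarrow> real) set" where
  "cube_face_plus n i = {z \<in> unit_cube n. z i = 1}"

definition connects_opposite_faces :: "nat \<Rightarrow> (nat \<Rightarrow> real) set \<Rightarrow> bool" where
  "connects_opposite_faces n S \<longleftrightarrow>
     connectedin (Euclidean_space n) S \<and>
     (\<exists>i<n. S \<inter> cube_face_minus n i \<noteq> {} \<and> S \<inter> cube_face_plus n i \<noteq> {})"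

end

theory Submission
  imports Defs "HOL-Homology.Homology"
begin

text \<open>
  Suppose that for every value \<open>p\<close> and every direction \<open>i\<close> the fibre \<open>f\<^sup>-\<^sup>1(p)\<close> splits into
  two closed parts, one missing the face \<open>x\<^sub>i = 1\<close> and the other missing \<open>x\<^sub>i = 0\<close>. Then each
  \<open>p\<close> has a neighbourhood \<open>N p\<close> and functions \<open>U p i\<close> on the cube, negative on \<open>x\<^sub>i = 0\<close>,
  positive on \<open>x\<^sub>i = 1\<close> and nonzero on all fibres over \<open>N p\<close>. Cover \<open>\<real>\<^sup>n\<^sup>-\<^sup>1\<close> by \<open>n\<close> colour
  classes of small bricks, bricks of one colour lying apart, so that each brick is mapped into
  one \<open>N p\<close>. Gluing the \<open>U p s\<close> of the bricks of colour \<open>s\<close> with bump functions pulled back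
  along \<open>f\<close> gives a map on \<open>I\<^sup>n\<close> satisfying the Poincar\'e--Miranda boundary conditions, whose
  zero is impossible. So some fibre is not separated between two opposite faces, and the
  cut-wire-fence theorem yields a compact connected part of it meeting both.
\<close>

section \<open>Cubes, faces and fibres\<close>

lemma Euclidean_space_eq_top_of_set:
  "Euclidean_space n = top_of_set (topspace (Euclidean_space n))"
  by (simp add: Euclidean_space_def euclidean_product_topology topspace_Euclidean_space)

lemma unit_cube_subset_Euclidean_space: "unit_cube n \<subseteq> topspace (Euclidean_space n)"
  by (auto simp: unit_cube_def topspace_Euclidean_space)

lemma compactin_Euclidean_space_iff:
  "compactin (Euclidean_space n) S \<longleftrightarrow> compact S \<and> S \<subseteq> topspace (Euclidean_space n)"
  by (subst Euclidean_space_eq_top_of_set) (auto simp: compactin_subtopology compactin_euclidean_iff)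

lemma connectedin_Euclidean_space_iff:
  "connectedin (Euclidean_space n) S \<longleftrightarrow> connected S \<and> S \<subseteq> topspace (Euclidean_space n)"
  by (subst Euclidean_space_eq_top_of_set) (auto simp: connectedin_subtopology connectedin_iff_connected)

lemma continuous_on_coordinate: "continuous_on S (\<lambda>x::nat \<Rightarrow> real. x i)"
  by (rule continuous_on_subset[OF continuous_on_product_coordinates]) auto

lemma compact_unit_cube: "compact (unit_cube n)"
proof -
  have "unit_cube n = PiE UNIV (\<lambda>i. if i < n then {0..1} else {0})"
    unfolding set_eq_iff PiE_iff extensional_UNIV unit_cube_def mem_Collect_eq
    by (metis atLeastAtMost_iff insert_iff empty_iff not_le UNIV_I)
  moreover have "compactin (powertop_real UNIV) (PiE UNIV (\<lambda>i. if i < n then {0..1} else {0::real}))"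
    by (subst compactin_PiE) auto
  ultimately show ?thesis
    by (simp add: euclidean_product_topology)
qed

lemma closed_cube_face_minus: "closed (cube_face_minus n i)"
  unfolding cube_face_minus_def
  by (rule continuous_closed_preimage_constant[OF continuous_on_coordinate
        compact_imp_closed[OF compact_unit_cube]])

lemma closed_cube_face_plus: "closed (cube_face_plus n i)"
  unfolding cube_face_plus_def
  by (rule continuous_closed_preimage_constant[OF continuous_on_coordinate
        compact_imp_closed[OF compact_unit_cube]])

lemma cube_faces_disjoint: "cube_face_minus n i \<inter> cube_face_plus n i = {}"
  by (auto simp: cube_face_minus_def cube_face_plus_def)

lemma cube_faces_nonempty:
  assumes "i < n"
  shows "cube_face_minus n i \<noteq> {}" "cube_face_plus n i \<noteq> {}"
proof -
  have "(\<lambda>_. 0) \<in> cube_face_minus n i" "(\<lambda>j. if j = i then 1 else 0) \<in> cube_face_plus n i"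
    using assms by (auto simp: cube_face_minus_def cube_face_plus_def unit_cube_def)
  then show "cube_face_minus n i \<noteq> {}" "cube_face_plus n i \<noteq> {}"
    by blast+
qed

lemma compact_fibre:
  fixes f :: "'a::t2_space \<Rightarrow> 'b::t1_space"
  assumes "compact Q" "continuous_on Q f"
  shows "compact (Q \<inter> f -` {p})"
proof -
  have "closed {x \<in> Q. f x = p}"
    by (rule continuous_closed_preimage_constant[OF assms(2) compact_imp_closed[OF assms(1)]])
  then have "compact (Q \<inter> {x \<in> Q. f x = p})"
    by (rule compact_Int_closed[OF assms(1)])
  moreover have "Q \<inter> {x \<in> Q. f x = p} = Q \<inter> f -` {p}"
    by auto
  ultimately show ?thesis
    by simp
qed

lemma bounded_coordinates_on_compact:
  fixes g :: "'a::topological_space \<Rightarrow> nat \<Rightarrow> real"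
  assumes "compact S" "continuous_on S g"
  obtains B where "\<And>x l. x \<in> S \<Longrightarrow> l < m \<Longrightarrow> \<bar>g x l\<bar> \<le> B"
proof -
  have "continuous_on S (\<lambda>x. \<Sum>l<m. \<bar>g x l\<bar>)"
    by (intro continuous_on_sum continuous_on_rabs continuous_on_product_then_coordinatewise[OF assms(2)])
  then have "bounded ((\<lambda>x. \<Sum>l<m. \<bar>g x l\<bar>) ` S)"
    by (intro compact_imp_bounded compact_continuous_image assms(1))
  then obtain B where B: "\<And>x. x \<in> S \<Longrightarrow> \<bar>\<Sum>l<m. \<bar>g x l\<bar>\<bar> \<le> B"
    by (auto simp: bounded_real)
  have "\<bar>g x l\<bar> \<le> B" if "x \<in> S" "l < m" for x l
  proof -
    have "\<bar>g x l\<bar> \<le> (\<Sum>l<m. \<bar>g x l\<bar>)"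
      using that(2) by (intro member_le_sum) auto
    then show ?thesis
      using B[OF that(1)] by linarith
  qed
  then show ?thesis
    using that by blast
qed

section \<open>The Poincar\'e--Miranda theorem\<close>

lemma homotopic_with_top_of_setI:
  assumes "continuous_on ({0..1::real} \<times> S) h" "h \<in> {0..1} \<times> S \<rightarrow> T"
    and "\<And>x. x \<in> S \<Longrightarrow> h (0, x) = f x" "\<And>x. x \<in> S \<Longrightarrow> h (1, x) = g x"
  shows "homotopic_with (\<lambda>x. True) (top_of_set S) (top_of_set T) f g"
proof -
  have "continuous_map (prod_topology (top_of_set {0..1}) (top_of_set S)) (top_of_set T) h"
    using assms(1,2) by (simp add: prod_topology_subtopology_eu continuous_map_subtopology_eu)
  then show ?thesis
    using assms(3,4) by (subst homotopic_with) auto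
qed

lemma convex_combination_in_unit_interval:
  fixes t a b :: real
  assumes "t \<in> {0..1}" "a \<in> {0..1}" "b \<in> {0..1}"
  shows "(1 - t) * a + t * b \<in> {0..1}"
proof -
  have "(1 - t) * a \<le> 1 - t" "t * b \<le> t"
    using assms by (auto intro: mult_left_le)
  then show ?thesis
    using assms by auto
qed

lemma convex_combination_nonzero:
  fixes t a b :: real
  assumes "t \<in> {0..1}" "0 < a * b"
  shows "(1 - t) * a + t * b \<noteq> 0"
proof -
  have "0 < (1 - t) * (a * a) + t * (a * b)"
  proof (cases "t = 1")
    case False
    then have "0 < (1 - t) * (a * a)"
      using assms by (auto intro!: mult_pos_pos simp: zero_less_mult_iff)
    then show ?thesis
      using assms by (simp add: add_pos_nonneg)
  qed (use assms in simp)
  then have "0 < a * ((1 - t) * a + t * b)"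
    by (simp add: algebra_simps)
  then show ?thesis
    by auto
qed

lemma contractible_space_unit_cube: "contractible_space (top_of_set (unit_cube n))"
proof -
  define c where "c = (\<lambda>i::nat. if i < n then 1/2 else (0::real))"
  let ?h = "\<lambda>(t::real, x::nat \<Rightarrow> real) i. (1 - t) * x i + t * c i"
  have "homotopic_with (\<lambda>x. True) (top_of_set (unit_cube n)) (top_of_set (unit_cube n)) id (\<lambda>x. c)"
  proof (rule homotopic_with_top_of_setI)
    show "continuous_on ({0..1} \<times> unit_cube n) ?h"
      unfolding case_prod_unfold
      by (intro continuous_on_coordinatewise_then_product continuous_intros
            continuous_on_compose2[OF continuous_on_coordinate continuous_on_snd]) auto
    show "?h \<in> {0..1} \<times> unit_cube n \<rightarrow> unit_cube n"
      using convex_combination_in_unit_interval[of _ _ "1/2"]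
      by (force simp: unit_cube_def c_def)
  qed auto
  then show ?thesis
    unfolding contractible_space_def by blast
qed

definition unit_nsphere :: "nat \<Rightarrow> (nat \<Rightarrow> real) set" where
  "unit_nsphere m = {u. (\<Sum>i\<le>m. (u i)\<^sup>2) = 1 \<and> (\<forall>i>m. u i = 0)}"

lemma not_contractible_unit_nsphere: "\<not> contractible_space (top_of_set (unit_nsphere m))"
proof -
  have "nsphere m = top_of_set (unit_nsphere m)"
    by (simp add: nsphere unit_nsphere_def euclidean_product_topology)
  then show ?thesis
    using non_contractible_space_nsphere by metis
qed

definition normalize_coords :: "nat \<Rightarrow> (nat \<Rightarrow> real) \<Rightarrow> nat \<Rightarrow> real" where
  "normalize_coords m v = (\<lambda>i. v i / sqrt (\<Sum>j\<le>m. (v j)\<^sup>2))"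

lemma continuous_map_normalize_coords:
  assumes cont: "\<And>i. continuous_on S (\<lambda>x. v x i)"
    and pos: "\<And>x. x \<in> S \<Longrightarrow> 0 < (\<Sum>j\<le>m. (v x j)\<^sup>2)"
    and vanish: "\<And>x i. x \<in> S \<Longrightarrow> m < i \<Longrightarrow> v x i = 0"
  shows "continuous_map (top_of_set S) (top_of_set (unit_nsphere m)) (\<lambda>x. normalize_coords m (v x))"
  unfolding continuous_map_subtopology_eu
proof
  have "sqrt (\<Sum>j\<le>m. (v x j)\<^sup>2) \<noteq> 0" if "x \<in> S" for x
    using pos[OF that] by simp
  then show "continuous_on S (\<lambda>x. normalize_coords m (v x))"
    unfolding normalize_coords_def
    by (intro continuous_on_coordinatewise_then_product continuous_on_divide continuous_intros cont) auto
  show "(\<lambda>x. normalize_coords m (v x)) \<in> S \<rightarrow> unit_nsphere m"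
  proof
    fix x assume "x \<in> S"
    with pos[of x] vanish[of x] show "normalize_coords m (v x) \<in> unit_nsphere m"
      by (auto simp: normalize_coords_def unit_nsphere_def power_divide simp flip: sum_divide_distrib)
  qed
qed

lemma unit_nsphere_large_coordinate:
  assumes "u \<in> unit_nsphere m"
  shows "\<exists>i\<le>m. 1 \<le> real (Suc m) * \<bar>u i\<bar>"
proof (rule ccontr)
  assume "\<not> ?thesis"
  then have "(real (Suc m) * u i)\<^sup>2 < 1" if "i \<le> m" for i
    using that by (metis abs_mult abs_of_nat abs_square_less_1 not_le power_mult_distrib)
  then have "(\<Sum>i\<le>m. (real (Suc m) * u i)\<^sup>2) < (\<Sum>i\<le>m. 1)"
    by (intro sum_strict_mono) auto
  moreover have "(\<Sum>i\<le>m. (real (Suc m) * u i)\<^sup>2) = (real (Suc m))\<^sup>2"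
    using assms by (simp add: unit_nsphere_def power_mult_distrib flip: sum_distrib_left)
  ultimately have "(real (Suc m))\<^sup>2 < real (Suc m)"
    by simp
  then show False
    by (simp add: power2_eq_square)
qed

definition clamp_to_cube :: "nat \<Rightarrow> (nat \<Rightarrow> real) \<Rightarrow> nat \<Rightarrow> real" where
  "clamp_to_cube n u i = (if i < n then max 0 (min 1 (1/2 + real n * u i)) else 0)"

lemma clamp_to_cube_in_unit_cube: "clamp_to_cube n u \<in> unit_cube n"
  by (auto simp: clamp_to_cube_def unit_cube_def)

lemma continuous_on_clamp_to_cube: "continuous_on S (clamp_to_cube n)"
proof -
  have "continuous_on S (\<lambda>u. clamp_to_cube n u i)" for i
    by (cases "i < n") (auto simp: clamp_to_cube_def intro!: continuous_intros continuous_on_coordinate)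
  then show ?thesis
    by (rule continuous_on_coordinatewise_then_product)
qed

lemma clamp_to_cube_large_coordinate:
  assumes "i < n" "1 \<le> real n * \<bar>u i\<bar>"
  shows "0 < u i \<Longrightarrow> clamp_to_cube n u \<in> cube_face_plus n i"
    and "u i < 0 \<Longrightarrow> clamp_to_cube n u \<in> cube_face_minus n i"
  using assms clamp_to_cube_in_unit_cube[of n u]
  by (auto simp: clamp_to_cube_def cube_face_plus_def cube_face_minus_def)

text \<open>
  For \<open>G\<close> with the Poincar\'e--Miranda signs, the straight line from \<open>G (clamp u)\<close> to \<open>u\<close> avoids
  the origin: a coordinate of \<open>u\<close> of absolute value at least \<open>1 / (m + 1)\<close> is clamped to the
  face on the same side, where \<open>G\<close> has the same sign.
\<close>

lemma homotopic_normalize_clamp_id: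
  fixes G :: "(nat \<Rightarrow> real) \<Rightarrow> nat \<Rightarrow> real"
  assumes cont: "\<And>i. continuous_on (unit_cube (Suc m)) (\<lambda>x. G x i)"
    and vanish: "\<And>x i. m < i \<Longrightarrow> G x i = 0"
    and neg: "\<And>i x. i \<le> m \<Longrightarrow> x \<in> cube_face_minus (Suc m) i \<Longrightarrow> G x i < 0"
    and pos: "\<And>i x. i \<le> m \<Longrightarrow> x \<in> cube_face_plus (Suc m) i \<Longrightarrow> 0 < G x i"
  shows "homotopic_with (\<lambda>x. True) (top_of_set (unit_nsphere m)) (top_of_set (unit_nsphere m))
           (\<lambda>u. normalize_coords m (G (clamp_to_cube (Suc m) u))) id"
proof -
  define w where "w = (\<lambda>(t::real, u) i. (1 - t) * G (clamp_to_cube (Suc m) u) i + t * u i)"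
  have w_nonzero: "0 < (\<Sum>j\<le>m. (w tu j)\<^sup>2)" if tu: "tu \<in> {0..1} \<times> unit_nsphere m" for tu
  proof -
    obtain t u where tu: "tu = (t, u)" "t \<in> {0..1}" "u \<in> unit_nsphere m"
      using tu by blast
    obtain i where i: "i \<le> m" "1 \<le> real (Suc m) * \<bar>u i\<bar>"
      using unit_nsphere_large_coordinate[OF tu(3)] by blast
    have "0 < G (clamp_to_cube (Suc m) u) i * u i"
    proof (cases "0 < u i")
      case True
      with i have "clamp_to_cube (Suc m) u \<in> cube_face_plus (Suc m) i"
        by (intro clamp_to_cube_large_coordinate(1)) auto
      then show ?thesis
        using pos[OF i(1)] True by (simp add: zero_less_mult_iff)
    next
      case False
      with i have "u i < 0"
        by (cases "u i = 0") auto
      with i have "clamp_to_cube (Suc m) u \<in> cube_face_minus (Suc m) i"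
        by (intro clamp_to_cube_large_coordinate(2)) auto
      then show ?thesis
        using neg[OF i(1)] \<open>u i < 0\<close> by (simp add: zero_less_mult_iff)
    qed
    then have "w tu i \<noteq> 0"
      using convex_combination_nonzero[OF tu(2)] by (simp add: w_def tu(1))
    then show ?thesis
      using i by (intro sum_pos2[of _ i]) auto
  qed
  have w_cont: "continuous_on ({0..1} \<times> unit_nsphere m) (\<lambda>tu. w tu j)" for j
  proof -
    have "continuous_on (unit_nsphere m) (\<lambda>u. G (clamp_to_cube (Suc m) u) j)"
      by (rule continuous_on_compose2[OF cont continuous_on_clamp_to_cube])
        (auto simp: clamp_to_cube_in_unit_cube)
    then have "continuous_on ({0..1} \<times> unit_nsphere m) (\<lambda>tu. G (clamp_to_cube (Suc m) (snd tu)) j)"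
      by (rule continuous_on_compose2[OF _ continuous_on_snd]) auto
    moreover have "continuous_on ({0..1} \<times> unit_nsphere m) (\<lambda>tu. snd tu j)"
      by (rule continuous_on_compose2[OF continuous_on_coordinate continuous_on_snd]) auto
    ultimately show ?thesis
      unfolding w_def case_prod_unfold
      by (intro continuous_on_add continuous_on_mult continuous_on_diff continuous_on_const
          continuous_on_fst continuous_on_id)
  qed
  have "continuous_map (top_of_set ({0..1} \<times> unit_nsphere m)) (top_of_set (unit_nsphere m))
          (\<lambda>tu. normalize_coords m (w tu))"
    by (rule continuous_map_normalize_coords[OF w_cont w_nonzero])
      (auto simp: w_def vanish unit_nsphere_def)
  then show ?thesis
    by (intro homotopic_with_top_of_setI[where h = "\<lambda>tu. normalize_coords m (w tu)"])
      (auto simp: continuous_map_subtopology_eu w_def normalize_coords_def unit_nsphere_def)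
qed

lemma poincare_miranda:
  fixes g :: "(nat \<Rightarrow> real) \<Rightarrow> nat \<Rightarrow> real"
  assumes cont: "\<And>s. s < n \<Longrightarrow> continuous_on (unit_cube n) (\<lambda>x. g x s)"
    and neg: "\<And>s x. \<lbrakk>s < n; x \<in> cube_face_minus n s\<rbrakk> \<Longrightarrow> g x s < 0"
    and pos: "\<And>s x. \<lbrakk>s < n; x \<in> cube_face_plus n s\<rbrakk> \<Longrightarrow> 0 < g x s"
  shows "\<exists>x \<in> unit_cube n. \<forall>s<n. g x s = 0"
proof (rule ccontr)
  assume "\<not> ?thesis"
  then have no_zero: "\<exists>s<n. g x s \<noteq> 0" if "x \<in> unit_cube n" for x
    using that by blast
  have "n \<noteq> 0"
    using no_zero[of "\<lambda>_. 0"] by (auto simp: unit_cube_def)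
  then obtain m where n: "n = Suc m"
    using not0_implies_Suc by blast
  define G where "G = (\<lambda>x i. if i < n then g x i else 0)"
  have G_cont: "continuous_on (unit_cube n) (\<lambda>x. G x i)" for i
    using cont by (cases "i < n") (auto simp: G_def)
  have G_nonzero: "0 < (\<Sum>j\<le>m. (G x j)\<^sup>2)" if x: "x \<in> unit_cube n" for x
  proof -
    obtain s where s: "s < n" "g x s \<noteq> 0"
      using no_zero x by blast
    then have "0 < (G x s)\<^sup>2"
      by (simp add: G_def)
    with s(1) n show ?thesis
      by (intro sum_pos2[of _ s]) auto
  qed
  have to_sphere: "continuous_map (top_of_set (unit_cube n)) (top_of_set (unit_nsphere m))
      (\<lambda>x. normalize_coords m (G x))"
    by (rule continuous_map_normalize_coords[OF G_cont G_nonzero]) (auto simp: G_def n)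
  have to_cube: "continuous_map (top_of_set (unit_nsphere m)) (top_of_set (unit_cube n)) (clamp_to_cube n)"
    using continuous_on_clamp_to_cube clamp_to_cube_in_unit_cube
    by (auto simp: continuous_map_subtopology_eu)
  have "homotopic_with (\<lambda>x. True) (top_of_set (unit_nsphere m)) (top_of_set (unit_nsphere m))
      ((\<lambda>x. normalize_coords m (G x)) \<circ> clamp_to_cube n) id"
    unfolding o_def n
    by (rule homotopic_normalize_clamp_id) (use G_cont neg pos in \<open>auto simp: G_def n\<close>)
  \<comment> \<open>the identity of the sphere factors, up to homotopy, through the contractible cube\<close>
  then have "contractible_space (top_of_set (unit_nsphere m))"
    using homotopy_dominated_contractibility[OF to_sphere to_cube] contractible_space_unit_cube
    by blast
  with not_contractible_unit_nsphere show False
    by blast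
qed

section \<open>Coloured brick coverings of \<open>\<real>\<^sup>m\<close>\<close>

lemma exists_gap_avoiding_values:
  fixes a d :: "nat \<Rightarrow> real"
  assumes "mono a"
  shows "\<exists>s\<le>m. \<forall>l<m. \<not> (a s < d l \<and> d l \<le> a (Suc s))"
proof (rule ccontr)
  assume "\<not> ?thesis"
  then have "\<forall>s\<in>{..m}. \<exists>l. l < m \<and> a s < d l \<and> d l \<le> a (Suc s)"
    by auto
  then obtain pick where pick: "\<And>s. s \<le> m \<Longrightarrow> pick s < m \<and> a s < d (pick s) \<and> d (pick s) \<le> a (Suc s)"
    by (metis atMost_iff bchoice)
  \<comment> \<open>the intervals \<open>(a s, a (Suc s)]\<close> are pairwise disjoint, so \<open>pick\<close> is injective\<close>
  have "inj_on pick {..m}"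
  proof (rule linorder_inj_onI)
    fix s s' assume "s < s'" "s' \<in> {..m}"
    then have "a (Suc s) \<le> a s'"
      using assms by (simp add: monoD Suc_leI)
    with pick[of s] pick[of s'] \<open>s < s'\<close> \<open>s' \<in> {..m}\<close> show "pick s \<noteq> pick s'"
      by force
  qed auto
  moreover have "pick ` {..m} \<subseteq> {..<m}"
    using pick by auto
  ultimately have "card {..m} \<le> card {..<m}"
    by (intro card_inj_on_le) auto
  then show False
    by simp
qed

lemma floor_between_ceiling_bounds:
  fixes t B :: real
  assumes "\<bar>t\<bar> \<le> B"
  shows "- \<lceil>B\<rceil> \<le> \<lfloor>t\<rfloor>" "\<lfloor>t\<rfloor> \<le> \<lceil>B\<rceil>"
proof -
  have "\<lfloor>- B\<rfloor> \<le> \<lfloor>t\<rfloor>"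
    using assms by (intro floor_mono) linarith
  then show "- \<lceil>B\<rceil> \<le> \<lfloor>t\<rfloor>"
    by (simp add: ceiling_def)
  have "\<lfloor>t\<rfloor> \<le> \<lfloor>B\<rfloor>"
    using assms by (intro floor_mono) linarith
  then show "\<lfloor>t\<rfloor> \<le> \<lceil>B\<rceil>"
    using floor_le_ceiling[of B] by linarith
qed

lemma int_eq_if_both_close:
  fixes k k' :: int and z b :: real
  assumes "\<bar>z - k\<bar> < b" "\<bar>z - k'\<bar> < b" "b \<le> 1/2"
  shows "k = k'"
proof -
  have "\<bar>real_of_int k - k'\<bar> < 1"
    using assms by linarith
  then show ?thesis
    by linarith
qed

lemma int_eq_if_in_same_gap:
  fixes k k' :: int and z a :: real
  assumes "k + a < z" "z < k + 1 - a" "k' + a < z" "z < k' + 1 - a" "0 \<le> a"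
  shows "k = k'"
proof -
  have "\<bar>real_of_int k - k'\<bar> < 1"
    using assms by linarith
  then show ?thesis
    by linarith
qed

lemma not_close_and_in_gap:
  fixes k k' :: int and z a b :: real
  assumes "\<bar>z - k\<bar> < b" "k' + a < z" "z < k' + 1 - a" "b \<le> a"
  shows False
proof (cases "k \<le> k'")
  case True
  then have "real_of_int k \<le> k'"
    by linarith
  then show False
    using assms by linarith
next
  case False
  then have "real_of_int k' + 1 \<le> k"
    by linarith
  then show False
    using assms by linarith
qed

text \<open>
  A brick of colour \<open>s \<le> m\<close> in \<open>\<real>\<^sup>m\<close> is given by a set \<open>L\<close> of coordinates and an integer
  point \<open>k\<close>: coordinate \<open>l \<in> L\<close> ranges over \<open>[k l - r s, k l + r s]\<close>, every other coordinate over
  \<open>[k l + r (s+1), k l + 1 - r (s+1)]\<close>, where \<open>r s = s / (2(m+1))\<close>. Distinct bricks of one colour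
  stay apart even after thickening by \<open>brick_margin m\<close>, and the \<open>m + 1\<close> colours together cover
  \<open>\<real>\<^sup>m\<close>; this is the covering behind \<open>dim \<real>\<^sup>m \<le> m\<close>.
\<close>

definition brick_margin :: "nat \<Rightarrow> real" where
  "brick_margin m = 1 / (8 * real (Suc m))"

definition brick_radius :: "nat \<Rightarrow> nat \<Rightarrow> real" where
  "brick_radius m s = 4 * real s * brick_margin m"

definition brick_lo :: "nat \<Rightarrow> nat \<Rightarrow> nat set \<Rightarrow> (nat \<Rightarrow> int) \<Rightarrow> nat \<Rightarrow> real" where
  "brick_lo m s L k l =
     (if l \<in> L then of_int (k l) - brick_radius m s else of_int (k l) + brick_radius m (Suc s))"

definition brick_hi :: "nat \<Rightarrow> nat \<Rightarrow> nat set \<Rightarrow> (nat \<Rightarrow> int) \<Rightarrow> nat \<Rightarrow> real" where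
  "brick_hi m s L k l =
     (if l \<in> L then of_int (k l) + brick_radius m s else of_int (k l) + 1 - brick_radius m (Suc s))"

definition brick :: "nat \<Rightarrow> nat \<Rightarrow> nat set \<Rightarrow> (nat \<Rightarrow> int) \<Rightarrow> (nat \<Rightarrow> real) set" where
  "brick m s L k = {z. \<forall>l<m. brick_lo m s L k l \<le> z l \<and> z l \<le> brick_hi m s L k l}"

lemma mono_brick_radius: "mono (brick_radius m)"
  by (intro monoI) (simp add: brick_radius_def brick_margin_def divide_right_mono)

lemma brick_margin_pos: "0 < brick_margin m"
  by (simp add: brick_margin_def)

lemma brick_radius_bounds:
  assumes "s \<le> m"
  shows "brick_radius m s + brick_margin m \<le> brick_radius m (Suc s) - brick_margin m"
    and "brick_radius m (Suc s) \<le> 1/2"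
    and "0 \<le> brick_radius m s"
proof -
  note margin = brick_margin_pos[of m]
  have "brick_radius m (Suc s) = brick_radius m s + 4 * brick_margin m"
    by (simp add: brick_radius_def algebra_simps)
  with margin show "brick_radius m s + brick_margin m \<le> brick_radius m (Suc s) - brick_margin m"
    by simp
  have "brick_radius m (Suc s) \<le> 4 * real (Suc m) * brick_margin m"
    unfolding brick_radius_def using assms margin by (intro mult_right_mono) auto
  also have "\<dots> = 1/2"
    by (simp add: brick_margin_def)
  finally show "brick_radius m (Suc s) \<le> 1/2" .
  show "0 \<le> brick_radius m s"
    using margin by (simp add: brick_radius_def)
qed

lemma brick_width:
  assumes "s \<le> m" "z \<in> brick m s L k" "z' \<in> brick m s L k" "l < m"
  shows "\<bar>z l - z' l\<bar> \<le> 1"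
proof -
  have "brick_hi m s L k l - brick_lo m s L k l \<le> 1"
    using brick_radius_bounds[OF assms(1)] brick_margin_pos[of m]
    by (auto simp: brick_lo_def brick_hi_def)
  moreover have "brick_lo m s L k l \<le> z l \<and> z l \<le> brick_hi m s L k l"
      "brick_lo m s L k l \<le> z' l \<and> z' l \<le> brick_hi m s L k l"
    using assms(2-4) by (auto simp: brick_def)
  ultimately show ?thesis
    by linarith
qed

lemma scaled_brick_coordinate_spread:
  assumes "s \<le> m" "0 < h" "(\<lambda>l. y l / h) \<in> brick m s L k" "(\<lambda>l. y' l / h) \<in> brick m s L k" "l < m"
  shows "\<bar>y l - y' l\<bar> \<le> h"
proof -
  have "\<bar>y l / h - y' l / h\<bar> \<le> 1"
    using brick_width[OF assms(1,3,4,5)] by simp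
  then show ?thesis
    using assms(2) by (simp add: diff_divide_distrib[symmetric] abs_divide divide_le_eq)
qed

lemma thickened_bricks_disjoint:
  assumes s: "s \<le> m"
    and L: "L \<subseteq> {..<m}" "L' \<subseteq> {..<m}"
    and k: "k \<in> extensional {..<m}" "k' \<in> extensional {..<m}"
    and z: "\<And>l. l < m \<Longrightarrow> brick_lo m s L k l - brick_margin m < z l \<and> z l < brick_hi m s L k l + brick_margin m"
    and z': "\<And>l. l < m \<Longrightarrow> brick_lo m s L' k' l - brick_margin m < z l \<and> z l < brick_hi m s L' k' l + brick_margin m"
  shows "L = L' \<and> k = k'"
proof -
  note r = brick_radius_bounds[OF s] brick_margin_pos[of m]
  let ?b = "brick_radius m s + brick_margin m" and ?a = "brick_radius m (Suc s) - brick_margin m"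
  have gap: "k l + ?a < z l" "z l < k l + 1 - ?a" if "l < m" "l \<notin> L" for l
    using z[of l] that by (auto simp: brick_lo_def brick_hi_def)
  have gap': "k' l + ?a < z l" "z l < k' l + 1 - ?a" if "l < m" "l \<notin> L'" for l
    using z'[of l] that by (auto simp: brick_lo_def brick_hi_def)
  have close1: "\<bar>z l - k l\<bar> < ?b" if "l < m" "l \<in> L" for l
    using z[of l] that by (auto simp: brick_lo_def brick_hi_def)
  have close1': "\<bar>z l - k' l\<bar> < ?b" if "l < m" "l \<in> L'" for l
    using z'[of l] that by (auto simp: brick_lo_def brick_hi_def)
  have same_L: "l \<in> L \<longleftrightarrow> l \<in> L'" if "l < m" for l
    using not_close_and_in_gap[OF close1 gap'] not_close_and_in_gap[OF close1' gap] r(1) that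
    by blast
  then have "L = L'"
    using L by blast
  moreover have "k l = k' l" if "l < m" for l
  proof (cases "l \<in> L")
    case True
    with same_L that have "l \<in> L'"
      by blast
    show ?thesis
      by (rule int_eq_if_both_close[OF close1[OF that True] close1'[OF that \<open>l \<in> L'\<close>]])
        (use r in linarith)
  next
    case False
    with same_L that have "l \<notin> L'"
      by blast
    show ?thesis
      by (rule int_eq_if_in_same_gap[OF gap[OF that False] gap'[OF that \<open>l \<notin> L'\<close>]])
        (use r in linarith)
  qed
  then have "k = k'"
    using k by (intro extensionalityI[of _ "{..<m}"]) auto
  ultimately show ?thesis
    by blast
qed

lemma brick_cover:
  "\<exists>s\<le>m. \<exists>L\<subseteq>{..<m}. \<exists>k \<in> PiE {..<m} (\<lambda>l. {\<lfloor>z l\<rfloor>..\<lfloor>z l\<rfloor> + 1}). z \<in> brick m s L k"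
proof -
  define fr where "fr l = z l - of_int \<lfloor>z l\<rfloor>" for l
  define d where "d l = min (fr l) (1 - fr l)" for l
  obtain s where s: "s \<le> m" and avoid: "\<And>l. l < m \<Longrightarrow> \<not> (brick_radius m s < d l \<and> d l \<le> brick_radius m (Suc s))"
    using exists_gap_avoiding_values[OF mono_brick_radius] by blast
  define L where "L = {l \<in> {..<m}. d l \<le> brick_radius m s}"
  define k where "k = restrict (\<lambda>l. if l \<in> L \<and> 1/2 < fr l then \<lfloor>z l\<rfloor> + 1 else \<lfloor>z l\<rfloor>) {..<m}"
  have floor: "of_int \<lfloor>z l\<rfloor> \<le> z l" "z l < of_int \<lfloor>z l\<rfloor> + 1" for l
    by linarith+
  have "brick_lo m s L k l \<le> z l \<and> z l \<le> brick_hi m s L k l" if l: "l < m" for l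
  proof (cases "l \<in> L")
    case True
    then have lo_hi: "brick_lo m s L k l = k l - brick_radius m s" "brick_hi m s L k l = k l + brick_radius m s"
      by (simp_all add: brick_lo_def brick_hi_def)
    have d: "d l \<le> brick_radius m s"
      using True by (simp add: L_def)
    show ?thesis
    proof (cases "1/2 < fr l")
      case True
      then have "real_of_int (k l) = \<lfloor>z l\<rfloor> + 1" "d l = 1 - fr l"
        using \<open>l \<in> L\<close> l by (simp_all add: k_def d_def)
      then show ?thesis
        using lo_hi d floor[of l] brick_radius_bounds(3)[OF s] unfolding fr_def by linarith
    next
      case False
      then have "real_of_int (k l) = \<lfloor>z l\<rfloor>" "d l = fr l"
        using l by (simp_all add: k_def d_def)
      then show ?thesis
        using lo_hi d floor[of l] brick_radius_bounds(3)[OF s] unfolding fr_def by linarith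
    qed
  next
    case False
    then have "brick_radius m (Suc s) < d l"
      using avoid[OF l] l by (auto simp: L_def)
    moreover have "k l = \<lfloor>z l\<rfloor>"
      using False l by (simp add: k_def)
    ultimately show ?thesis
      using False unfolding brick_lo_def brick_hi_def d_def fr_def by simp
  qed
  moreover have "k \<in> PiE {..<m} (\<lambda>l. {\<lfloor>z l\<rfloor>..\<lfloor>z l\<rfloor> + 1})"
    by (auto simp: k_def)
  moreover have "L \<subseteq> {..<m}"
    by (auto simp: L_def)
  ultimately show ?thesis
    using s by (auto simp: brick_def)
qed

lemma brick_cover_bounded:
  assumes "\<And>l. l < m \<Longrightarrow> \<bar>z l\<bar> \<le> B"
  obtains s L k where "s \<le> m" "L \<subseteq> {..<m}" "k \<in> PiE {..<m} (\<lambda>_. {-\<lceil>B\<rceil>..\<lceil>B\<rceil> + 1})"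
    "z \<in> brick m s L k"
proof -
  obtain s L k where "s \<le> m" "L \<subseteq> {..<m}" "z \<in> brick m s L k"
    and k: "k \<in> PiE {..<m} (\<lambda>l. {\<lfloor>z l\<rfloor>..\<lfloor>z l\<rfloor> + 1})"
    using brick_cover by metis
  have "k l \<in> {-\<lceil>B\<rceil>..\<lceil>B\<rceil> + 1}" if "l < m" for l
    using PiE_mem[OF k, of l] floor_between_ceiling_bounds[OF assms[OF that]] that by auto
  with k have "k \<in> PiE {..<m} (\<lambda>_. {-\<lceil>B\<rceil>..\<lceil>B\<rceil> + 1})"
    by (simp add: PiE_iff)
  then show ?thesis
    using that \<open>s \<le> m\<close> \<open>L \<subseteq> {..<m}\<close> \<open>z \<in> brick m s L k\<close> by blast
qed

lemma prod_eq_1_imp_factors_eq_1: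
  fixes g :: "'a \<Rightarrow> real"
  assumes "finite I" "\<And>i. i \<in> I \<Longrightarrow> 0 \<le> g i" "\<And>i. i \<in> I \<Longrightarrow> g i \<le> 1" "prod g I = 1" "i \<in> I"
  shows "g i = 1"
proof -
  have "prod g I = g i * prod g (I - {i})"
    using assms(1,5) by (simp add: prod.remove)
  also have "\<dots> \<le> g i"
    using assms(2,3,5) by (intro mult_left_le prod_le_1) auto
  finally show ?thesis
    using assms(3)[OF assms(5)] assms(4) by linarith
qed

definition tent :: "real \<Rightarrow> real \<Rightarrow> real \<Rightarrow> real \<Rightarrow> real" where
  "tent e a b x = max 0 (min 1 (min (x - a) (b - x) / e + 1))"

lemma tent_bounds: "0 \<le> tent e a b x" "tent e a b x \<le> 1"
  by (auto simp: tent_def)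

lemma tent_eq_1: "e > 0 \<Longrightarrow> a \<le> x \<Longrightarrow> x \<le> b \<Longrightarrow> tent e a b x = 1"
  by (auto simp: tent_def)

lemma tent_eq_1_imp_between:
  assumes "e > 0" "tent e a b x = 1"
  shows "a \<le> x \<and> x \<le> b"
proof -
  have "1 \<le> min (x - a) (b - x) / e + 1"
    using assms(2) unfolding tent_def by (metis max.cobounded2 min.absorb_iff1 min.cobounded1 order.trans nle_le zero_neq_one max_def)
  then have "0 \<le> min (x - a) (b - x)"
    using assms(1) by (simp add: zero_le_divide_iff)
  then show ?thesis
    by simp
qed

lemma tent_pos_imp_near:
  assumes "e > 0" "tent e a b x > 0"
  shows "a - e < x \<and> x < b + e"
proof -
  have "0 < (min (x - a) (b - x) / e + 1) * e"
    using assms by (auto simp: tent_def)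
  also have "\<dots> = min (x - a) (b - x) + e"
    using assms(1) by (simp add: distrib_right)
  finally show ?thesis
    by linarith
qed

lemma continuous_on_tent: "continuous_on S g \<Longrightarrow> e > 0 \<Longrightarrow> continuous_on S (\<lambda>y. tent e a b (g y))"
  unfolding tent_def by (intro continuous_intros) auto

definition brick_bump :: "nat \<Rightarrow> nat \<Rightarrow> nat set \<Rightarrow> (nat \<Rightarrow> int) \<Rightarrow> (nat \<Rightarrow> real) \<Rightarrow> real" where
  "brick_bump m s L k z =
     (\<Prod>l<m. tent (brick_margin m) (brick_lo m s L k l) (brick_hi m s L k l) (z l))"

lemma brick_bump_bounds: "0 \<le> brick_bump m s L k z" "brick_bump m s L k z \<le> 1"
  unfolding brick_bump_def using tent_bounds by (auto intro: prod_nonneg prod_le_1)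

lemma brick_bump_eq_1: "z \<in> brick m s L k \<Longrightarrow> brick_bump m s L k z = 1"
  unfolding brick_bump_def using tent_eq_1[OF brick_margin_pos]
  by (intro prod.neutral) (auto simp: brick_def)

lemma brick_bump_eq_1_imp_in_brick:
  assumes "brick_bump m s L k z = 1"
  shows "z \<in> brick m s L k"
proof -
  have tent_1: "tent (brick_margin m) (brick_lo m s L k l) (brick_hi m s L k l) (z l) = 1" if "l < m" for l
    using prod_eq_1_imp_factors_eq_1[of "{..<m}"
        "\<lambda>l. tent (brick_margin m) (brick_lo m s L k l) (brick_hi m s L k l) (z l)" l]
      assms that tent_bounds
    unfolding brick_bump_def by simp
  show ?thesis
    unfolding brick_def
    using tent_eq_1_imp_between[OF brick_margin_pos tent_1] by blast
qed

lemma brick_bump_pos_imp_near: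
  assumes "0 < brick_bump m s L k z" "l < m"
  shows "brick_lo m s L k l - brick_margin m < z l \<and> z l < brick_hi m s L k l + brick_margin m"
proof (rule tent_pos_imp_near[OF brick_margin_pos])
  have "tent (brick_margin m) (brick_lo m s L k l) (brick_hi m s L k l) (z l) \<noteq> 0"
  proof
    assume "tent (brick_margin m) (brick_lo m s L k l) (brick_hi m s L k l) (z l) = 0"
    then have "brick_bump m s L k z = 0"
      unfolding brick_bump_def using assms(2) by (intro prod_zero) auto
    with assms(1) show False
      by simp
  qed
  then show "0 < tent (brick_margin m) (brick_lo m s L k l) (brick_hi m s L k l) (z l)"
    using tent_bounds(1) by (simp add: less_le)
qed

lemma brick_bump_pos_unique:
  assumes "s \<le> m" "L \<subseteq> {..<m}" "L' \<subseteq> {..<m}" "k \<in> extensional {..<m}" "k' \<in> extensional {..<m}"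
    and "0 < brick_bump m s L k z" "0 < brick_bump m s L' k' z"
  shows "L = L' \<and> k = k'"
  by (rule thickened_bricks_disjoint[OF assms(1-5)
        brick_bump_pos_imp_near[OF assms(6)] brick_bump_pos_imp_near[OF assms(7)]])

lemma continuous_on_brick_bump:
  "(\<And>l. continuous_on S (\<lambda>x. g x l)) \<Longrightarrow> continuous_on S (\<lambda>x. brick_bump m s L k (g x))"
  unfolding brick_bump_def
  by (intro continuous_on_prod continuous_on_tent) (auto simp: brick_margin_def)

section \<open>Blending separating functions along a coloured partition\<close>

lemma sum_eq_single:
  fixes w :: "'a \<Rightarrow> real"
  assumes "finite P" "p \<in> P" "\<And>q. q \<in> P \<Longrightarrow> q \<noteq> p \<Longrightarrow> w q = 0"
  shows "sum w P = w p"
  using assms by (simp add: sum.remove sum.neutral)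

lemma sum_le_1_if_single_positive:
  fixes w :: "'a \<Rightarrow> real"
  assumes "finite P" and nonneg: "\<And>p. p \<in> P \<Longrightarrow> 0 \<le> w p" and le1: "\<And>p. p \<in> P \<Longrightarrow> w p \<le> 1"
    and single: "\<And>p q. p \<in> P \<Longrightarrow> q \<in> P \<Longrightarrow> 0 < w p \<Longrightarrow> 0 < w q \<Longrightarrow> p = q"
  shows "sum w P \<le> 1"
proof (cases "\<exists>p\<in>P. 0 < w p")
  case True
  then obtain p where p: "p \<in> P" "0 < w p"
    by blast
  have "w q = 0" if "q \<in> P" "q \<noteq> p" for q
    using single[of q p] nonneg[of q] p that by force
  then have "sum w P = w p"
    by (rule sum_eq_single[OF \<open>finite P\<close> p(1)])
  then show ?thesis
    using le1[OF p(1)] by simp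
next
  case False
  then have "sum w P = 0"
    using nonneg by (intro sum.neutral) force
  then show ?thesis
    by simp
qed

lemma weighted_sum_with_remainder_neg:
  fixes w v :: "'a \<Rightarrow> real"
  assumes "finite P" and w: "\<And>p. p \<in> P \<Longrightarrow> 0 \<le> w p" and sum_w: "sum w P \<le> 1"
    and v: "\<And>p. p \<in> P \<Longrightarrow> v p < 0" and "c < 0"
  shows "(\<Sum>p\<in>P. w p * v p) + (1 - sum w P) * c < 0"
proof -
  define M where "M = Max (insert c (v ` P))"
  have fin: "finite (insert c (v ` P))"
    using \<open>finite P\<close> by simp
  have "M < 0"
    using Max_in[OF fin] \<open>c < 0\<close> v unfolding M_def by auto
  have "(\<Sum>p\<in>P. w p * v p) \<le> (\<Sum>p\<in>P. w p * M)"
    using fin by (intro sum_mono mult_left_mono w) (auto simp: M_def)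
  moreover have "(1 - sum w P) * c \<le> (1 - sum w P) * M"
    using fin sum_w by (intro mult_left_mono) (auto simp: M_def)
  ultimately have "(\<Sum>p\<in>P. w p * v p) + (1 - sum w P) * c \<le> sum w P * M + (1 - sum w P) * M"
    by (simp add: sum_distrib_right)
  also have "\<dots> = M"
    by (simp add: algebra_simps)
  finally show ?thesis
    using \<open>M < 0\<close> by linarith
qed

lemma weighted_sum_with_remainder_pos:
  fixes w v :: "'a \<Rightarrow> real"
  assumes "finite P" "\<And>p. p \<in> P \<Longrightarrow> 0 \<le> w p" "sum w P \<le> 1"
    and "\<And>p. p \<in> P \<Longrightarrow> 0 < v p" "0 < c"
  shows "0 < (\<Sum>p\<in>P. w p * v p) + (1 - sum w P) * c"
proof -
  have "(\<Sum>p\<in>P. w p * - v p) + (1 - sum w P) * - c < 0"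
    using assms by (intro weighted_sum_with_remainder_neg) auto
  then show ?thesis
    by (simp add: sum_negf)
qed

text \<open>
  Each colour \<open>s\<close> contributes a family of weights \<open>\<rho> s\<close> with disjoint supports, and at every point
  some weight is \<open>1\<close>. Blending the functions \<open>u s\<close> with these weights and the coordinate
  \<open>x s - 1/2\<close> with the remaining weight gives a map satisfying the Poincar\'e--Miranda
  boundary conditions; at its zero the weight equal to \<open>1\<close> isolates a single \<open>u s \<pi>\<close>.
\<close>

lemma coloured_partition_zero:
  fixes \<rho> u :: "nat \<Rightarrow> 'i \<Rightarrow> (nat \<Rightarrow> real) \<Rightarrow> real"
  assumes fin: "\<And>s. s < n \<Longrightarrow> finite (P s)"
    and \<rho>_cont: "\<And>s \<pi>. s < n \<Longrightarrow> \<pi> \<in> P s \<Longrightarrow> continuous_on (unit_cube n) (\<rho> s \<pi>)"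
    and \<rho>_nonneg: "\<And>s \<pi> x. x \<in> unit_cube n \<Longrightarrow> 0 \<le> \<rho> s \<pi> x"
    and \<rho>_le_1: "\<And>s \<pi> x. x \<in> unit_cube n \<Longrightarrow> \<rho> s \<pi> x \<le> 1"
    and \<rho>_disjoint: "\<And>s \<pi> \<pi>' x. \<lbrakk>s < n; \<pi> \<in> P s; \<pi>' \<in> P s; x \<in> unit_cube n;
                                 0 < \<rho> s \<pi> x; 0 < \<rho> s \<pi>' x\<rbrakk> \<Longrightarrow> \<pi> = \<pi>'"
    and \<rho>_cover: "\<And>x. x \<in> unit_cube n \<Longrightarrow> \<exists>s<n. \<exists>\<pi>\<in>P s. \<rho> s \<pi> x = 1"
    and u_cont: "\<And>s \<pi>. s < n \<Longrightarrow> \<pi> \<in> P s \<Longrightarrow> continuous_on (unit_cube n) (u s \<pi>)"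
    and u_neg: "\<And>s \<pi> x. \<lbrakk>s < n; \<pi> \<in> P s; x \<in> cube_face_minus n s\<rbrakk> \<Longrightarrow> u s \<pi> x < 0"
    and u_pos: "\<And>s \<pi> x. \<lbrakk>s < n; \<pi> \<in> P s; x \<in> cube_face_plus n s\<rbrakk> \<Longrightarrow> 0 < u s \<pi> x"
  shows "\<exists>x\<in>unit_cube n. \<exists>s<n. \<exists>\<pi>\<in>P s. \<rho> s \<pi> x = 1 \<and> u s \<pi> x = 0"
proof -
  define W where "W x s = (\<Sum>\<pi>\<in>P s. \<rho> s \<pi> x)" for x s
  define \<phi> where "\<phi> x s = (\<Sum>\<pi>\<in>P s. \<rho> s \<pi> x * u s \<pi> x) + (1 - W x s) * (x s - 1/2)" for x s
  have face: "x \<in> unit_cube n" if "x \<in> cube_face_minus n s \<or> x \<in> cube_face_plus n s" for x s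
    using that by (auto simp: cube_face_minus_def cube_face_plus_def)
  have W_le_1: "W x s \<le> 1" if "s < n" "x \<in> unit_cube n" for x s
    unfolding W_def using that
    by (intro sum_le_1_if_single_positive fin \<rho>_nonneg \<rho>_le_1) (auto intro: \<rho>_disjoint)
  have "\<exists>x \<in> unit_cube n. \<forall>s<n. \<phi> x s = 0"
  proof (rule poincare_miranda)
    show "continuous_on (unit_cube n) (\<lambda>x. \<phi> x s)" if "s < n" for s
      unfolding \<phi>_def W_def using that
      by (intro continuous_intros continuous_on_coordinate \<rho>_cont u_cont fin) auto
    show "\<phi> x s < 0" if "s < n" "x \<in> cube_face_minus n s" for s x
      unfolding \<phi>_def W_def using that face[of x s] W_le_1[of s x]
      by (intro weighted_sum_with_remainder_neg fin \<rho>_nonneg u_neg)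
        (auto simp: W_def cube_face_minus_def)
    show "0 < \<phi> x s" if "s < n" "x \<in> cube_face_plus n s" for s x
      unfolding \<phi>_def W_def using that face[of x s] W_le_1[of s x]
      by (intro weighted_sum_with_remainder_pos fin \<rho>_nonneg u_pos)
        (auto simp: W_def cube_face_plus_def)
  qed
  then obtain x where x: "x \<in> unit_cube n" "\<And>s. s < n \<Longrightarrow> \<phi> x s = 0"
    by blast
  obtain s \<pi> where s: "s < n" "\<pi> \<in> P s" "\<rho> s \<pi> x = 1"
    using \<rho>_cover[OF x(1)] by blast
  have others: "\<rho> s \<pi>' x = 0" if "\<pi>' \<in> P s" "\<pi>' \<noteq> \<pi>" for \<pi>'
    using \<rho>_disjoint[of s \<pi>' \<pi> x] \<rho>_nonneg[OF x(1), of s \<pi>'] s x(1) that by force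
  have "\<phi> x s = u s \<pi> x"
    unfolding \<phi>_def W_def
    using sum_eq_single[OF fin[OF s(1)] s(2), of "\<lambda>\<pi>'. \<rho> s \<pi>' x * u s \<pi>' x"]
      sum_eq_single[OF fin[OF s(1)] s(2), of "\<lambda>\<pi>'. \<rho> s \<pi>' x"] others s(3)
    by simp
  then show ?thesis
    using x s by auto
qed

lemma brick_zero_of_coloured_family:
  fixes z :: "(nat \<Rightarrow> real) \<Rightarrow> nat \<Rightarrow> real"
    and u :: "nat \<Rightarrow> nat set \<Rightarrow> (nat \<Rightarrow> int) \<Rightarrow> (nat \<Rightarrow> real) \<Rightarrow> real"
  assumes z_cont: "\<And>l. continuous_on (unit_cube (Suc m)) (\<lambda>x. z x l)"
    and u_cont: "\<And>s L k. s \<le> m \<Longrightarrow> continuous_on (unit_cube (Suc m)) (u s L k)"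
    and u_neg: "\<And>s L k x. s \<le> m \<Longrightarrow> x \<in> cube_face_minus (Suc m) s \<Longrightarrow> u s L k x < 0"
    and u_pos: "\<And>s L k x. s \<le> m \<Longrightarrow> x \<in> cube_face_plus (Suc m) s \<Longrightarrow> 0 < u s L k x"
  obtains x s L k where "x \<in> unit_cube (Suc m)" "s \<le> m" "z x \<in> brick m s L k" "u s L k x = 0"
proof -
  have "continuous_on (unit_cube (Suc m)) z"
    by (intro continuous_on_coordinatewise_then_product z_cont)
  then obtain B where B: "\<And>x l. x \<in> unit_cube (Suc m) \<Longrightarrow> l < m \<Longrightarrow> \<bar>z x l\<bar> \<le> B"
    by (rule bounded_coordinates_on_compact[OF compact_unit_cube, where m = m]) (rule that)
  define P where "P = {\<pi> :: nat set \<times> (nat \<Rightarrow> int). fst \<pi> \<subseteq> {..<m} \<and> snd \<pi> \<in> PiE {..<m} (\<lambda>_. {-\<lceil>B\<rceil>..\<lceil>B\<rceil> + 1})}"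
  have "finite P"
    by (rule finite_subset[of _ "Pow {..<m} \<times> PiE {..<m} (\<lambda>_. {-\<lceil>B\<rceil>..\<lceil>B\<rceil> + 1})"])
      (auto simp: P_def intro!: finite_PiE)
  have P_mem: "fst \<pi> \<subseteq> {..<m}" "snd \<pi> \<in> extensional {..<m}" if "\<pi> \<in> P" for \<pi>
    using that by (simp_all add: P_def PiE_def)
  define \<rho> where "\<rho> s \<pi> x = brick_bump m s (fst \<pi>) (snd \<pi>) (z x)" for s \<pi> x
  have "\<exists>x\<in>unit_cube (Suc m). \<exists>s<Suc m. \<exists>\<pi>\<in>P. \<rho> s \<pi> x = 1 \<and> u s (fst \<pi>) (snd \<pi>) x = 0"
  proof (rule coloured_partition_zero[where P = "\<lambda>_. P"])
    show "continuous_on (unit_cube (Suc m)) (\<rho> s \<pi>)" for s \<pi>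
      unfolding \<rho>_def by (intro continuous_on_brick_bump z_cont)
    show "0 \<le> \<rho> s \<pi> x" "\<rho> s \<pi> x \<le> 1" for s \<pi> x
      by (simp_all add: \<rho>_def brick_bump_bounds)
    show "\<pi> = \<pi>'" if "s < Suc m" "\<pi> \<in> P" "\<pi>' \<in> P" "0 < \<rho> s \<pi> x" "0 < \<rho> s \<pi>' x" for s \<pi> \<pi>' x
    proof -
      have "fst \<pi> = fst \<pi>' \<and> snd \<pi> = snd \<pi>'"
        using that P_mem[OF that(2)] P_mem[OF that(3)]
        by (intro brick_bump_pos_unique) (simp_all add: \<rho>_def)
      then show ?thesis
        by (simp add: prod_eq_iff)
    qed
    show "\<exists>s<Suc m. \<exists>\<pi>\<in>P. \<rho> s \<pi> x = 1" if x: "x \<in> unit_cube (Suc m)" for x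
    proof -
      obtain s L k where "s \<le> m" "L \<subseteq> {..<m}" "k \<in> PiE {..<m} (\<lambda>_. {-\<lceil>B\<rceil>..\<lceil>B\<rceil> + 1})"
        and "z x \<in> brick m s L k"
        using brick_cover_bounded[of m "z x" B] B[OF x] by metis
      then have "s < Suc m" "(L, k) \<in> P" "\<rho> s (L, k) x = 1"
        by (simp_all add: P_def \<rho>_def brick_bump_eq_1)
      then show ?thesis
        by (intro exI[of _ s] conjI bexI[of _ "(L, k)"])
    qed
  qed (use \<open>finite P\<close> u_cont u_neg u_pos in auto)
  then obtain x s \<pi> where x: "x \<in> unit_cube (Suc m)" "s \<le> m" "\<rho> s \<pi> x = 1" "u s (fst \<pi>) (snd \<pi>) x = 0"
    by (metis less_Suc_eq_le)
  have "z x \<in> brick m s (fst \<pi>) (snd \<pi>)"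
    using x(3) by (simp add: \<rho>_def brick_bump_eq_1_imp_in_brick)
  then show ?thesis
    by (rule that[OF x(1,2) _ x(4)])
qed

section \<open>Fibres separated between opposite faces\<close>

lemma dist_fun_le_twice:
  fixes x y :: "'a::countable \<Rightarrow> 'b::metric_space"
  assumes "\<And>i. dist (x i) (y i) \<le> e"
  shows "dist x y \<le> 2 * e"
proof -
  have "0 \<le> e"
    using assms[of undefined] zero_le_dist order_trans by blast
  have term_le: "(1/2::real)^j * min (dist (x (from_nat j)) (y (from_nat j))) 1 \<le> (1/2)^j * e" for j
    using assms by (intro mult_left_mono) (auto simp: min_le_iff_disj)
  have summable: "summable (\<lambda>j. (1/2::real)^j * e)"
    by (intro summable_mult2 summable_geometric) simp
  have "dist x y = suminf (\<lambda>j. (1/2::real)^j * min (dist (x (from_nat j)) (y (from_nat j))) 1)"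
    by (simp add: dist_fun_def)
  also have "\<dots> \<le> suminf (\<lambda>j. (1/2::real)^j * e)"
    by (intro suminf_le term_le summable summable_comparison_test'[OF summable, of 0])
      (use term_le in auto)
  also have "\<dots> = 2 * e"
    using suminf_geometric[of "1/2::real"] by (simp add: suminf_mult2[symmetric, OF summable_geometric])
  finally show ?thesis .
qed

lemma diameter_le_if_dist_le:
  fixes S :: "'a::metric_space set"
  assumes "\<And>x y. x \<in> S \<Longrightarrow> y \<in> S \<Longrightarrow> dist x y \<le> d" "0 \<le> d"
  shows "diameter S \<le> d"
  using assms by (auto simp: diameter_def intro!: cSUP_least)

lemma Lebesgue_number_coordinatewise:
  fixes T :: "(nat \<Rightarrow> real) set"
  assumes "compact T" and N: "\<And>y. open (N y)" "\<And>y. y \<in> N y"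
  shows "\<exists>h>0. \<forall>Y\<subseteq>T. (\<forall>y\<in>Y. \<forall>y'\<in>Y. \<forall>i. \<bar>y i - y' i\<bar> \<le> h) \<longrightarrow> (\<exists>p. Y \<subseteq> N p)"
proof -
  obtain \<delta> where "0 < \<delta>" and \<delta>: "\<And>Y. \<lbrakk>Y \<subseteq> T; diameter Y < \<delta>\<rbrakk> \<Longrightarrow> \<exists>B \<in> range N. Y \<subseteq> B"
    using Lebesgue_number_lemma[OF \<open>compact T\<close>, of "range N"] N by blast
  show ?thesis
  proof (intro exI[of _ "\<delta> / 4"] conjI allI impI)
    show "0 < \<delta> / 4"
      using \<open>0 < \<delta>\<close> by simp
    fix Y assume Y: "Y \<subseteq> T" "\<forall>y\<in>Y. \<forall>y'\<in>Y. \<forall>i. \<bar>y i - y' i\<bar> \<le> \<delta> / 4"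
    have "dist y y' \<le> 2 * (\<delta> / 4)" if "y \<in> Y" "y' \<in> Y" for y y'
      using Y(2) that by (intro dist_fun_le_twice) (simp add: dist_real_def)
    then have "diameter Y \<le> \<delta> / 2"
      using \<open>0 < \<delta>\<close> by (intro diameter_le_if_dist_le) auto
    then have "diameter Y < \<delta>"
      using \<open>0 < \<delta>\<close> by linarith
    then show "\<exists>p. Y \<subseteq> N p"
      using \<delta>[OF Y(1)] by blast
  qed
qed

lemma scaled_bricks_in_neighbourhoods:
  fixes T :: "(nat \<Rightarrow> real) set"
  assumes "0 < h" and vanish: "\<And>y l. y \<in> T \<Longrightarrow> m \<le> l \<Longrightarrow> y l = 0"
    and small: "\<forall>Y\<subseteq>T. (\<forall>y\<in>Y. \<forall>y'\<in>Y. \<forall>l. \<bar>y l - y' l\<bar> \<le> h) \<longrightarrow> (\<exists>p. Y \<subseteq> N p)"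
  obtains q where "\<And>s L k. s \<le> m \<Longrightarrow> {y \<in> T. (\<lambda>l. y l / h) \<in> brick m s L k} \<subseteq> N (q s L k)"
proof -
  have ex: "\<exists>p. {y \<in> T. (\<lambda>l. y l / h) \<in> brick m s L k} \<subseteq> N p" if "s \<le> m" for s L k
  proof (rule small[rule_format])
    show "\<bar>y l - y' l\<bar> \<le> h"
      if "y \<in> {y \<in> T. (\<lambda>l. y l / h) \<in> brick m s L k}" "y' \<in> {y \<in> T. (\<lambda>l. y l / h) \<in> brick m s L k}"
      for y y' l
    proof (cases "l < m")
      case True
      with that show ?thesis
        using scaled_brick_coordinate_spread[OF \<open>s \<le> m\<close> \<open>0 < h\<close>] by blast
    next
      case False
      with that show ?thesis
        using vanish[of y l] vanish[of y' l] \<open>0 < h\<close> by simp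
    qed
  qed auto
  show ?thesis
  proof (rule that)
    fix s L k
    assume "s \<le> m"
    show "{y \<in> T. (\<lambda>l. y l / h) \<in> brick m s L k} \<subseteq> N (SOME p. {y \<in> T. (\<lambda>l. y l / h) \<in> brick m s L k} \<subseteq> N p)"
      by (rule someI_ex[OF ex[OF \<open>s \<le> m\<close>]])
  qed
qed

lemma connected_subset_joining_unless_separated:
  fixes K F0 F1 :: "'a::metric_space set"
  assumes "compact K" "closed F0" "closed F1"
    and "\<not> separated_between (top_of_set K) (K \<inter> F0) (K \<inter> F1)"
  shows "\<exists>S\<subseteq>K. compact S \<and> connected S \<and> S \<inter> F0 \<noteq> {} \<and> S \<inter> F1 \<noteq> {}"
proof -
  have "Hausdorff_space (top_of_set K)"
    by (simp add: Hausdorff_space_subtopology)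
  then obtain C where C: "connectedin (top_of_set K) C" "\<not> disjnt C (K \<inter> F0)" "\<not> disjnt C (K \<inter> F1)"
    using cut_wire_fence_theorem[of "top_of_set K" "K \<inter> F0" "K \<inter> F1"] assms
    by (auto simp: compact_space_subtopology closedin_closed_Int)
  then have "C \<subseteq> K" "connected C"
    by (auto simp: connectedin_subtopology connectedin_iff_connected)
  have "closure C \<subseteq> K"
    using \<open>C \<subseteq> K\<close> assms(1) by (simp add: closure_minimal compact_imp_closed)
  moreover have "compact (closure C)"
    using compact_Int_closed[OF assms(1) closed_closure[of C]] calculation by (simp add: Int_absorb1)
  moreover have "connected (closure C)"
    using \<open>connected C\<close> by (rule connected_imp_connected_closure)
  moreover have "closure C \<inter> F0 \<noteq> {}" "closure C \<inter> F1 \<noteq> {}"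
    using C closure_subset[of C] unfolding disjnt_def by blast+
  ultimately show ?thesis
    by blast
qed

lemma separated_between_closed_cover:
  fixes K F0 F1 :: "'a::topological_space set"
  assumes "closed K" "closed F0" "closed F1" "F0 \<inter> F1 = {}"
    and "separated_between (top_of_set K) (K \<inter> F0) (K \<inter> F1)"
  obtains A B where "closed A" "closed B" "A \<inter> B = {}" "K \<subseteq> A \<union> B" "F0 \<subseteq> A" "F1 \<subseteq> B"
proof -
  obtain U V where UV: "closedin (top_of_set K) U" "closedin (top_of_set K) V" "U \<union> V = K"
    "disjnt U V" "K \<inter> F0 \<subseteq> U" "K \<inter> F1 \<subseteq> V"
    using assms(5) unfolding separated_between_alt by auto
  have "closed (U \<union> F0)" "closed (V \<union> F1)"
    by (intro closed_Un closedin_closed_trans[OF UV(1) assms(1)] assms(2))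
      (intro closed_Un closedin_closed_trans[OF UV(2) assms(1)] assms(3))
  moreover have "(U \<union> F0) \<inter> (V \<union> F1) = {}"
    using UV(3-6) assms(4) unfolding disjnt_def by blast
  moreover have "K \<subseteq> (U \<union> F0) \<union> (V \<union> F1)"
    using UV(3) by blast
  ultimately show ?thesis
    using that[of "U \<union> F0" "V \<union> F1"] by blast
qed

lemma infdist_separating_function:
  fixes A B :: "'a::metric_space set"
  assumes "closed A" "closed B" "A \<inter> B = {}" "A \<noteq> {}" "B \<noteq> {}"
  shows "continuous_on S (\<lambda>x. infdist x A - infdist x B)"
    and "x \<in> A \<Longrightarrow> infdist x A - infdist x B < 0"
    and "x \<in> B \<Longrightarrow> 0 < infdist x A - infdist x B"
proof -
  show "continuous_on S (\<lambda>x. infdist x A - infdist x B)"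
    by (intro continuous_intros continuous_on_infdist continuous_on_id)
  show "infdist x A - infdist x B < 0" if "x \<in> A"
    using that assms infdist_zero[OF that] infdist_pos_not_in_closed[of B x] by auto
  show "0 < infdist x A - infdist x B" if "x \<in> B"
    using that assms infdist_zero[OF that] infdist_pos_not_in_closed[of A x] by auto
qed

text \<open>
  If a fibre of \<open>f\<close> splits into two closed pieces avoiding \<open>F1\<close> and \<open>F0\<close> respectively, a
  distance function separating \<open>F0\<close> from \<open>F1\<close> can be chosen nonzero on the whole fibre, hence
  (by compactness of its zero set) on all fibres over a neighbourhood of \<open>p\<close>.
\<close>

lemma separating_function_near_fibre:
  fixes f :: "'a::metric_space \<Rightarrow> 'b::metric_space"
  assumes Q: "compact Q" "continuous_on Q f"
    and F: "closed F0" "closed F1" "F0 \<inter> F1 = {}" "F0 \<noteq> {}" "F1 \<noteq> {}"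
    and sep: "separated_between (top_of_set (Q \<inter> f -` {p})) (Q \<inter> f -` {p} \<inter> F0) (Q \<inter> f -` {p} \<inter> F1)"
  shows "\<exists>N (u :: 'a \<Rightarrow> real). open N \<and> p \<in> N \<and> continuous_on Q u \<and> (\<forall>x\<in>F0. u x < 0) \<and> (\<forall>x\<in>F1. 0 < u x) \<and>
           (\<forall>x\<in>Q. f x \<in> N \<longrightarrow> u x \<noteq> 0)"
proof -
  obtain A B where AB: "closed A" "closed B" "A \<inter> B = {}" "Q \<inter> f -` {p} \<subseteq> A \<union> B" "F0 \<subseteq> A" "F1 \<subseteq> B"
    using separated_between_closed_cover[OF compact_imp_closed[OF compact_fibre[OF Q]] F(1-3) sep] by blast
  have "A \<noteq> {}" "B \<noteq> {}"
    using AB(5,6) F(4,5) by blast+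
  note u = infdist_separating_function[OF AB(1-3) this]
  define u where "u x = infdist x A - infdist x B" for x
  define Z where "Z = Q \<inter> u -` {0}"
  have "compact Z"
    unfolding Z_def u_def by (rule compact_fibre[OF Q(1) u(1)])
  then have "closed (f ` Z)"
    by (intro compact_imp_closed compact_continuous_image continuous_on_subset[OF Q(2)]) (auto simp: Z_def)
  moreover have "p \<notin> f ` Z"
  proof
    assume "p \<in> f ` Z"
    then obtain z where "z \<in> Q" "f z = p" "u z = 0"
      by (auto simp: Z_def)
    then show False
      using AB(4) u(2,3)[of z] by (force simp: u_def)
  qed
  moreover have "\<forall>x\<in>Q. f x \<in> - f ` Z \<longrightarrow> u x \<noteq> 0"
    by (auto simp: Z_def)
  moreover have "continuous_on Q u" "\<forall>x\<in>F0. u x < 0" "\<forall>x\<in>F1. 0 < u x"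
    using u AB(5,6) by (auto simp: u_def)
  ultimately show ?thesis
    using open_Compl[of "f ` Z"] by blast
qed

lemma separating_functions_near_values:
  fixes f :: "(nat \<Rightarrow> real) \<Rightarrow> 'b::metric_space"
  assumes f_cont: "continuous_on (unit_cube n) f"
    and sep: "\<forall>p. \<forall>i<n. separated_between (top_of_set (unit_cube n \<inter> f -` {p}))
                (unit_cube n \<inter> f -` {p} \<inter> cube_face_minus n i) (unit_cube n \<inter> f -` {p} \<inter> cube_face_plus n i)"
  obtains N and U :: "'b \<Rightarrow> nat \<Rightarrow> (nat \<Rightarrow> real) \<Rightarrow> real"
    where "\<And>p. open (N p)" "\<And>p. p \<in> N p"
      "\<And>p i. i < n \<Longrightarrow> continuous_on (unit_cube n) (U p i)"
      "\<And>p i x. i < n \<Longrightarrow> x \<in> cube_face_minus n i \<Longrightarrow> U p i x < 0"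
      "\<And>p i x. i < n \<Longrightarrow> x \<in> cube_face_plus n i \<Longrightarrow> 0 < U p i x"
      "\<And>p i x. i < n \<Longrightarrow> x \<in> unit_cube n \<Longrightarrow> f x \<in> N p \<Longrightarrow> U p i x \<noteq> 0"
proof -
  define good where "good p i V u \<longleftrightarrow> open V \<and> p \<in> V \<and> continuous_on (unit_cube n) u \<and>
      (\<forall>x\<in>cube_face_minus n i. u x < 0) \<and> (\<forall>x\<in>cube_face_plus n i. 0 < u x) \<and>
      (\<forall>x\<in>unit_cube n. f x \<in> V \<longrightarrow> u x \<noteq> 0)" for p i V and u :: "(nat \<Rightarrow> real) \<Rightarrow> real"
  have good_exists: "\<exists>V u. good p i V u" if "i < n" for p i
    unfolding good_def
    by (rule separating_function_near_fibre[OF compact_unit_cube f_cont closed_cube_face_minus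
          closed_cube_face_plus cube_faces_disjoint cube_faces_nonempty[OF that] sep[rule_format, OF that]])
  define V where "V p i = (SOME V. \<exists>u. good p i V u)" for p i
  define U where "U p i = (SOME u. good p i (V p i) u)" for p i
  have good: "good p i (V p i) (U p i)" if "i < n" for p i
  proof -
    have "\<exists>u. good p i (V p i) u"
      unfolding V_def by (rule someI_ex) (rule good_exists[OF that])
    then show ?thesis
      unfolding U_def by (rule someI_ex)
  qed
  have V: "open (V p i)" "p \<in> V p i" if "i < n" for p i
    using good[OF that] by (simp_all add: good_def)
  show ?thesis
  proof (rule that[of "\<lambda>p. \<Inter>i<n. V p i" U])
    show "open (\<Inter>i<n. V p i)" for p
      using V by (intro open_INT) auto
    show "p \<in> (\<Inter>i<n. V p i)" for p
      using V by blast
    show "continuous_on (unit_cube n) (U p i)" if "i < n" for p i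
      using good[OF that] by (simp add: good_def)
    show "U p i x < 0" if "i < n" "x \<in> cube_face_minus n i" for p i x
      using good[OF that(1)] that(2) by (simp add: good_def)
    show "0 < U p i x" if "i < n" "x \<in> cube_face_plus n i" for p i x
      using good[OF that(1)] that(2) by (simp add: good_def)
    show "U p i x \<noteq> 0" if "i < n" "x \<in> unit_cube n" "f x \<in> (\<Inter>i<n. V p i)" for p i x
      using good[OF that(1)] that by (simp add: good_def)
  qed
qed

lemma exists_fibre_not_separated_between_faces:
  fixes f :: "(nat \<Rightarrow> real) \<Rightarrow> nat \<Rightarrow> real"
  assumes f_cont: "continuous_on (unit_cube (Suc m)) f"
    and vanish: "\<And>x l. x \<in> unit_cube (Suc m) \<Longrightarrow> m \<le> l \<Longrightarrow> f x l = 0"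
  shows "\<exists>p. \<exists>i<Suc m. \<not> separated_between (top_of_set (unit_cube (Suc m) \<inter> f -` {p}))
           (unit_cube (Suc m) \<inter> f -` {p} \<inter> cube_face_minus (Suc m) i)
           (unit_cube (Suc m) \<inter> f -` {p} \<inter> cube_face_plus (Suc m) i)"
proof (rule ccontr)
  let ?Q = "unit_cube (Suc m)"
  assume "\<not> ?thesis"
  then have sep: "\<forall>p. \<forall>i<Suc m. separated_between (top_of_set (?Q \<inter> f -` {p}))
      (?Q \<inter> f -` {p} \<inter> cube_face_minus (Suc m) i) (?Q \<inter> f -` {p} \<inter> cube_face_plus (Suc m) i)"
    by metis
  obtain N and U :: "(nat \<Rightarrow> real) \<Rightarrow> nat \<Rightarrow> (nat \<Rightarrow> real) \<Rightarrow> real"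
    where N: "\<And>p. open (N p)" "\<And>p. p \<in> N p"
    and U_cont: "\<And>p i. i < Suc m \<Longrightarrow> continuous_on ?Q (U p i)"
    and U_neg: "\<And>p i x. i < Suc m \<Longrightarrow> x \<in> cube_face_minus (Suc m) i \<Longrightarrow> U p i x < 0"
    and U_pos: "\<And>p i x. i < Suc m \<Longrightarrow> x \<in> cube_face_plus (Suc m) i \<Longrightarrow> 0 < U p i x"
    and U_nonzero: "\<And>p i x. i < Suc m \<Longrightarrow> x \<in> ?Q \<Longrightarrow> f x \<in> N p \<Longrightarrow> U p i x \<noteq> 0"
    using separating_functions_near_values[OF f_cont sep] by blast
  obtain h where "0 < h"
    and small_in_N: "\<forall>Y\<subseteq>f ` ?Q. (\<forall>y\<in>Y. \<forall>y'\<in>Y. \<forall>l. \<bar>y l - y' l\<bar> \<le> h) \<longrightarrow> (\<exists>p. Y \<subseteq> N p)"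
    using Lebesgue_number_coordinatewise[OF compact_continuous_image[OF f_cont compact_unit_cube] N]
    by (elim exE conjE) (rule that)
  obtain q where q: "\<And>s L k. s \<le> m \<Longrightarrow> {y \<in> f ` ?Q. (\<lambda>l. y l / h) \<in> brick m s L k} \<subseteq> N (q s L k)"
    using scaled_bricks_in_neighbourhoods[OF \<open>0 < h\<close> _ small_in_N] vanish by blast
  obtain x s L k where x: "x \<in> ?Q" "s \<le> m" "(\<lambda>l. f x l / h) \<in> brick m s L k" "U (q s L k) s x = 0"
  proof (rule brick_zero_of_coloured_family[where z = "\<lambda>x l. f x l / h" and u = "\<lambda>s L k. U (q s L k) s"])
    show "continuous_on ?Q (\<lambda>x. f x l / h)" for l
      using \<open>0 < h\<close>
      by (intro continuous_on_divide continuous_on_const continuous_on_product_then_coordinatewise[OF f_cont]) auto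
  qed (use that U_cont U_neg U_pos in auto)
  then have "f x \<in> N (q s L k)"
    using q[OF x(2)] by blast
  with x show False
    using U_nonzero by auto
qed

lemma fibre_part_connecting_opposite_faces:
  fixes f :: "(nat \<Rightarrow> real) \<Rightarrow> nat \<Rightarrow> real"
  assumes "continuous_on (unit_cube (Suc m)) f"
    and "\<And>x l. x \<in> unit_cube (Suc m) \<Longrightarrow> m \<le> l \<Longrightarrow> f x l = 0"
  obtains p i S where "i < Suc m" "S \<subseteq> unit_cube (Suc m) \<inter> f -` {p}" "compact S" "connected S"
    "S \<inter> cube_face_minus (Suc m) i \<noteq> {}" "S \<inter> cube_face_plus (Suc m) i \<noteq> {}"
proof -
  obtain p i where "i < Suc m"
    and not_separated: "\<not> separated_between (top_of_set (unit_cube (Suc m) \<inter> f -` {p}))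
      (unit_cube (Suc m) \<inter> f -` {p} \<inter> cube_face_minus (Suc m) i)
      (unit_cube (Suc m) \<inter> f -` {p} \<inter> cube_face_plus (Suc m) i)"
    using exists_fibre_not_separated_between_faces[OF assms] by blast
  then show ?thesis
    using connected_subset_joining_unless_separated[OF compact_fibre[OF compact_unit_cube assms(1)]
        closed_cube_face_minus closed_cube_face_plus not_separated] that
    by blast
qed

theorem theoremB:
  fixes n :: nat and f :: "(nat \<Rightarrow> real) \<Rightarrow> (nat \<Rightarrow> real)"
  assumes "n \<ge> 1"
    and "continuous_map (subtopology (Euclidean_space n) (unit_cube n)) (Euclidean_space (n - 1)) f"
  shows "\<exists>p \<in> topspace (Euclidean_space (n - 1)). \<exists>S.
           S \<subseteq> unit_cube n \<inter> f -` {p} \<and> compactin (Euclidean_space n) S \<and>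
           connects_opposite_faces n S"
proof -
  obtain m where n: "n = Suc m"
    using assms(1) by (cases n) auto
  have "topspace (subtopology (Euclidean_space n) (unit_cube n)) = unit_cube n"
    using unit_cube_subset_Euclidean_space by auto
  then have f_cont: "continuous_on (unit_cube n) f" and f_into: "f \<in> unit_cube n \<rightarrow> topspace (Euclidean_space m)"
    using assms(2) by (simp_all add: cm_Euclidean_space_iff_continuous_on n)
  have "f x l = 0" if "x \<in> unit_cube n" "m \<le> l" for x l
    using f_into that by (auto simp: topspace_Euclidean_space)
  then obtain p i S where "i < n" and S: "S \<subseteq> unit_cube n \<inter> f -` {p}" "compact S" "connected S"
    "S \<inter> cube_face_minus n i \<noteq> {}" "S \<inter> cube_face_plus n i \<noteq> {}"
    using fibre_part_connecting_opposite_faces[of m f] f_cont unfolding n by metis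
  obtain x where "x \<in> S"
    using S(4) by blast
  then have "p \<in> topspace (Euclidean_space (n - 1))"
    using S(1) f_into by (auto simp: n)
  have "S \<subseteq> topspace (Euclidean_space n)"
    using S(1) unit_cube_subset_Euclidean_space by blast
  with S \<open>i < n\<close> \<open>p \<in> topspace (Euclidean_space (n - 1))\<close> show ?thesis
    unfolding connects_opposite_faces_def compactin_Euclidean_space_iff connectedin_Euclidean_space_iff
    by blast
qed

end
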